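(* Let $R$ be an associative ring and $S=\begin{pmatrix}A&B\\ C&D\end{pmatrix}$ a non-commuting switch over $R$. Let $P=A^{-1}B^{-1}A$ and $Q=B^{-1}(1-A)$. For $n\ge2$ and $1\le i\le n-1$ let $S_i=I_{i-1}\oplus S\oplus I_{n-i-1}$ be the $n\times n$ block-diagonal matrix. Then $$(P^{n-1},\ldots,P,1)\,S_i=(P^{n-1},\ldots,P,1)\quad\text{and}\quad S_i\,(1,Q,\ldots,Q^{n-1})^T=(1,Q,\ldots,Q^{n-1})^T.$$
   Context: A non-commuting switch over $R$ is $S=\begin{pmatrix}A&B\\ C&D\end{pmatrix}$ where $A$, $A-1$, $B$ are invertible elements of $R$ that do not commute and satisfy the fundamental equation $A^{-1}B^{-1}AB-BA^{-1}B^{-1}A=B^{-1}AB-A$, and $C=A^{-1}B^{-1}A(1-A)$, $D=1-A^{-1}B^{-1}AB$. *)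

theory Defs
  imports Main
begin

definition invertible_r :: "'a::ring_1 \<Rightarrow> bool" where
  "invertible_r a \<longleftrightarrow> (\<exists>b. a * b = 1 \<and> b * a = 1)"

definition rinv :: "'a::ring_1 \<Rightarrow> 'a" where
  "rinv a = (THE b. a * b = 1 \<and> b * a = 1)"

definition nc_switch :: "'a::ring_1 \<Rightarrow> 'a \<Rightarrow> 'a \<Rightarrow> 'a \<Rightarrow> bool" where
  "nc_switch A B C D \<longleftrightarrow>
     invertible_r A \<and> invertible_r (A - 1) \<and> invertible_r B \<and> A * B \<noteq> B * A \<and>
     rinv A * rinv B * A * B - B * rinv A * rinv B * A = rinv B * A * B - A \<and>
     C = rinv A * rinv B * A * (1 - A) \<and>
     D = 1 - rinv A * rinv B * A * B"

text \<open>The n x n matrix S_i = I_{i-1} \<oplus> S \<oplus> I_{n-i-1}, with rows and columns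
  indexed by 1..n (entries outside 1..n are irrelevant).\<close>

definition switch_mat :: "nat \<Rightarrow> 'a::ring_1 \<Rightarrow> 'a \<Rightarrow> 'a \<Rightarrow> 'a \<Rightarrow> nat \<Rightarrow> nat \<Rightarrow> 'a" where
  "switch_mat i A B C D j k =
     (if j = i \<and> k = i then A
      else if j = i \<and> k = i + 1 then B
      else if j = i + 1 \<and> k = i then C
      else if j = i + 1 \<and> k = i + 1 then D
      else if j = k then 1 else 0)"

end

theory Submission
  imports Defs
begin

text \<open>Both vectors are geometric, so S_i fixes them as soon as the 2x2 block S fixes
  (P, 1) from the left and (1, Q) from the right, i.e. P A + C = P, P B + D = 1,
  A + B Q = 1 and C + D Q = Q. These follow from the formulas for C and D and from
  B B^-1 = 1 alone.\<close>

lemma invertible_r_rinv: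
  fixes a :: "'a::ring_1"
  assumes "invertible_r a"
  shows "a * rinv a = 1" "rinv a * a = 1"
proof -
  obtain b where b: "a * b = 1" "b * a = 1"
    using assms unfolding invertible_r_def by blast
  have unique: "c = b" if "a * c = 1 \<and> c * a = 1" for c
  proof -
    have "c = c * (a * b)" using b by simp
    also have "\<dots> = (c * a) * b" by (simp only: mult.assoc)
    finally show "c = b" using that by simp
  qed
  have "rinv a = b"
    unfolding rinv_def by (rule the_equality) (use b unique in blast)+
  then show "a * rinv a = 1" "rinv a * a = 1" using b by simp_all
qed

lemma sum_switch_mat_left:
  fixes v :: "nat \<Rightarrow> 'a::ring_1"
  assumes "1 \<le> i" "i < n" "k \<in> {1..n}"
  shows "(\<Sum>j=1..n. v j * switch_mat i A B C D j k) =
    (if k = i then v i * A + v (i + 1) * C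
     else if k = i + 1 then v i * B + v (i + 1) * D
     else v k)"
proof -
  have "(\<Sum>j=1..n. v j * switch_mat i A B C D j k) =
      (\<Sum>j\<in>{i, i + 1, k}. v j * switch_mat i A B C D j k)"
    by (rule sum.mono_neutral_right) (use assms in \<open>auto simp: switch_mat_def\<close>)
  then show ?thesis
    by (cases "k = i"; cases "k = i + 1") (auto simp: switch_mat_def insert_commute)
qed

lemma sum_switch_mat_right:
  fixes w :: "nat \<Rightarrow> 'a::ring_1"
  assumes "1 \<le> i" "i < n" "j \<in> {1..n}"
  shows "(\<Sum>k=1..n. switch_mat i A B C D j k * w k) =
    (if j = i then A * w i + B * w (i + 1)
     else if j = i + 1 then C * w i + D * w (i + 1)
     else w j)"
proof -
  have "(\<Sum>k=1..n. switch_mat i A B C D j k * w k) =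
      (\<Sum>k\<in>{i, i + 1, j}. switch_mat i A B C D j k * w k)"
    by (rule sum.mono_neutral_right) (use assms in \<open>auto simp: switch_mat_def\<close>)
  then show ?thesis
    by (cases "j = i"; cases "j = i + 1") (auto simp: switch_mat_def insert_commute)
qed

lemma switch_mat_fixes_row:
  fixes v :: "nat \<Rightarrow> 'a::ring_1"
  assumes "1 \<le> i" "i < n"
    and "v i * A + v (i + 1) * C = v i" "v i * B + v (i + 1) * D = v (i + 1)"
  shows "\<forall>k\<in>{1..n}. (\<Sum>j=1..n. v j * switch_mat i A B C D j k) = v k"
proof
  show "(\<Sum>j=1..n. v j * switch_mat i A B C D j k) = v k" if "k \<in> {1..n}" for k
    unfolding sum_switch_mat_left[OF assms(1,2) that] using assms(3,4) by simp
qed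

lemma switch_mat_fixes_column:
  fixes w :: "nat \<Rightarrow> 'a::ring_1"
  assumes "1 \<le> i" "i < n"
    and "A * w i + B * w (i + 1) = w i" "C * w i + D * w (i + 1) = w (i + 1)"
  shows "\<forall>j\<in>{1..n}. (\<Sum>k=1..n. switch_mat i A B C D j k * w k) = w j"
proof
  show "(\<Sum>k=1..n. switch_mat i A B C D j k * w k) = w j" if "j \<in> {1..n}" for j
    unfolding sum_switch_mat_right[OF assms(1,2) that] using assms(3,4) by simp
qed

lemma switch_mat_fixes_powers_row:
  fixes P :: "'a::ring_1"
  assumes "1 \<le> i" "i < n" and "P * A + C = P" "P * B + D = 1"
  shows "\<forall>k\<in>{1..n}. (\<Sum>j=1..n. P ^ (n - j) * switch_mat i A B C D j k) = P ^ (n - k)"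
proof (rule switch_mat_fixes_row[OF assms(1,2)])
  have Pi: "P ^ (n - i) = P ^ (n - (i + 1)) * P"
    using \<open>i < n\<close> by (simp add: Suc_diff_Suc flip: power_Suc2)
  have "P ^ (n - i) * A + P ^ (n - (i + 1)) * C = P ^ (n - (i + 1)) * (P * A + C)"
    by (simp add: Pi distrib_left mult.assoc)
  then show "P ^ (n - i) * A + P ^ (n - (i + 1)) * C = P ^ (n - i)"
    by (simp add: assms(3) Pi)
  have "P ^ (n - i) * B + P ^ (n - (i + 1)) * D = P ^ (n - (i + 1)) * (P * B + D)"
    by (simp add: Pi distrib_left mult.assoc)
  then show "P ^ (n - i) * B + P ^ (n - (i + 1)) * D = P ^ (n - (i + 1))"
    by (simp add: assms(4))
qed

lemma switch_mat_fixes_powers_column: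
  fixes Q :: "'a::ring_1"
  assumes "1 \<le> i" "i < n" and "A + B * Q = 1" "C + D * Q = Q"
  shows "\<forall>j\<in>{1..n}. (\<Sum>k=1..n. switch_mat i A B C D j k * Q ^ (k - 1)) = Q ^ (j - 1)"
proof (rule switch_mat_fixes_column[OF assms(1,2)])
  have Qi: "Q ^ (i + 1 - 1) = Q * Q ^ (i - 1)"
    using assms(1) by (simp flip: power_Suc)
  have "A * Q ^ (i - 1) + B * Q ^ (i + 1 - 1) = (A + B * Q) * Q ^ (i - 1)"
    by (simp only: Qi distrib_right mult.assoc)
  then show "A * Q ^ (i - 1) + B * Q ^ (i + 1 - 1) = Q ^ (i - 1)"
    by (simp only: assms(3) mult_1_left)
  have "C * Q ^ (i - 1) + D * Q ^ (i + 1 - 1) = (C + D * Q) * Q ^ (i - 1)"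
    by (simp only: Qi distrib_right mult.assoc)
  then show "C * Q ^ (i - 1) + D * Q ^ (i + 1 - 1) = Q ^ (i + 1 - 1)"
    by (simp only: assms(4) Qi)
qed

lemma nc_switch_row_identities:
  fixes A B C D :: "'a::ring_1"
  assumes "nc_switch A B C D"
  defines "P \<equiv> rinv A * rinv B * A"
  shows "P * A + C = P" "P * B + D = 1"
  using assms unfolding nc_switch_def P_def by (simp_all add: algebra_simps)

lemma nc_switch_column_identities:
  fixes A B C D :: "'a::ring_1"
  assumes "nc_switch A B C D"
  defines "Q \<equiv> rinv B * (1 - A)"
  shows "A + B * Q = 1" "C + D * Q = Q"
proof -
  define P where "P = rinv A * rinv B * A"
  have B: "invertible_r B" and C: "C = P * (1 - A)" and D: "D = 1 - P * B"
    using assms(1) unfolding nc_switch_def P_def by auto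
  have BQ: "B * Q = 1 - A"
    unfolding Q_def by (simp add: mult.assoc[symmetric] invertible_r_rinv[OF B])
  then show "A + B * Q = 1" by simp
  have "D * Q = Q - P * (B * Q)" unfolding D by (simp add: algebra_simps mult.assoc)
  then show "C + D * Q = Q" by (simp add: BQ C)
qed

theorem lemma9p2:
  fixes A B C D :: "'a::ring_1" and n i :: nat
  assumes "nc_switch A B C D"
    and "2 \<le> n" and "1 \<le> i" and "i \<le> n - 1"
  defines "P \<equiv> rinv A * rinv B * A"
    and "Q \<equiv> rinv B * (1 - A)"
  shows "(\<forall>k\<in>{1..n}. (\<Sum>j=1..n. P ^ (n - j) * switch_mat i A B C D j k) = P ^ (n - k))
       \<and> (\<forall>j\<in>{1..n}. (\<Sum>k=1..n. switch_mat i A B C D j k * Q ^ (k - 1)) = Q ^ (j - 1))"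
proof -
  have "i < n" using assms(2,4) by simp
  have P: "P * A + C = P" "P * B + D = 1"
    using nc_switch_row_identities[OF assms(1)] unfolding P_def by simp_all
  have Q: "A + B * Q = 1" "C + D * Q = Q"
    using nc_switch_column_identities[OF assms(1)] unfolding Q_def by simp_all
  show ?thesis
    using switch_mat_fixes_powers_row[OF assms(3) \<open>i < n\<close> P]
      switch_mat_fixes_powers_column[OF assms(3) \<open>i < n\<close> Q]
    by (rule conjI)
qed

end
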